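(* Let $n\ge 2$, and let $A=(a_{ij})$ be a real symmetric $n\times n$ matrix with eigenvalues $\mu_1\ge \mu_2\ge \cdots\ge \mu_n$. Assume that $0\le a_{ij}\le 1$ for all $i\ne j$, and $a_{ii}\ge 0$ for all $1\le i\le n$. Then \[ \mu_{n-1}+\mu_n\ge -\frac{2n}{3}. \] In particular, $\mu_{n-1}\ge -\frac{n}{3}$. *)

theory Defs
  imports "Jordan_Normal_Form.Char_Poly"
begin

end

theory Submission
  imports Defs "Jordan_Normal_Form.Schur_Decomposition" "HOL-Analysis.Convex"
begin

(* Orthonormalising the first two columns of a real Schur triangularisation of A, ordered so that
   its diagonal starts with mu_n, mu_(n-1), gives orthonormal x, y with x'Ax = mu_n and
   y'Ay = mu_(n-1).  For z = x + i y we have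
   sum z_j^2 = 0, sum |z_j|^2 = 2 and x'Ax + y'Ay = sum a_jk Re (z_j conj z_k), which by the
   bounds on the entries is at least - sum max (0, - Re (z_j conj z_k)).  Writing
   z_j conj z_k = r e^(i t), the majorant
     max (0, - cos t) <= 1/3 - cos t / 2 + 7/36 cos 2t - 1/36 cos 4t
   turns this double sum into squared moduli of sums.  Dropping the negative ones, Cauchy-Schwarz
   together with sum z_j^2 = 0 bounds the rest by n/3 * sum |z_j|^2 = 2n/3. *)

section \<open>A trigonometric majorant of the negative part\<close>

(* For c = cos t the right-hand side is 1/3 - cos t / 2 + 7/36 cos 2t - 1/36 cos 4t;
   it touches the left-hand side at c = -1, -1/2, 1/2, 1. *)
lemma neg_part_le_chebyshev_combination:
  fixes c :: real
  assumes "\<bar>c\<bar> \<le> 1"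
  shows "max 0 (- c) \<le> 1/3 - c/2 + 7/36 * (2 * c^2 - 1) - 1/36 * (2 * (2 * c^2 - 1)^2 - 1)"
proof (cases "c \<ge> 0")
  case True
  have expand: "1/3 - c/2 + 7/36 * (2 * c^2 - 1) - 1/36 * (2 * (2 * c^2 - 1)^2 - 1)
      = (2*c - 1)^2 * (1 - c) * (c + 2) / 18"
    by (simp add: field_simps power2_eq_square)
  have "0 \<le> (2*c - 1)^2 * (1 - c) * (c + 2)"
    using assms True by (intro mult_nonneg_nonneg) auto
  then show ?thesis
    unfolding expand using True by simp
next
  case False
  have expand: "1/3 - c/2 + 7/36 * (2 * c^2 - 1) - 1/36 * (2 * (2 * c^2 - 1)^2 - 1)
      = (2*c + 1)^2 * (1 + c) * (2 - c) / 18 - c"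
    by (simp add: field_simps power2_eq_square)
  have "0 \<le> (2*c + 1)^2 * (1 + c) * (2 - c)"
    using assms False by (intro mult_nonneg_nonneg) auto
  then show ?thesis
    unfolding expand using False by simp
qed

(* For z = r e^(i t) and k >= 1 this is r e^(i k t). *)
definition phase_power :: "nat \<Rightarrow> complex \<Rightarrow> complex" where
  "phase_power k z = z ^ k / of_real (cmod z ^ (k - 1))"

lemma phase_power_mult_cnj:
  "phase_power k u * cnj (phase_power k v) = phase_power k (u * cnj v)"
  by (simp add: phase_power_def norm_mult power_mult_distrib)

lemma norm_phase_power:
  assumes "k \<ge> 1"
  shows "cmod (phase_power k z) = cmod z"
proof (cases "z = 0")
  case False
  have "cmod z ^ k = cmod z ^ (k - 1) * cmod z"
    using assms by (simp flip: power_Suc2)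
  then show ?thesis
    using False by (simp add: phase_power_def norm_divide norm_power)
qed (use assms in \<open>simp add: phase_power_def\<close>)

lemma norm_mult_phase_power2: "of_real (cmod z) * phase_power 2 z = z ^ 2"
  by (cases "z = 0") (simp_all add: phase_power_def)

lemma Re_power2_eq_norm: "Re (z ^ 2) = 2 * (Re z)^2 - (cmod z)^2"
  by (simp add: Re_power2 cmod_power2)

lemma Re_phase_power2:
  "Re (phase_power 2 w) = cmod w * (2 * (Re w / cmod w)^2 - 1)"
proof (cases "w = 0")
  case False
  have "Re (phase_power 2 w) = (2 * (Re w)^2 - (cmod w)^2) / cmod w"
    by (simp add: phase_power_def Re_divide_of_real Re_power2_eq_norm)
  also have "\<dots> = cmod w * (2 * (Re w / cmod w)^2 - 1)"
    using False by (simp add: field_simps power2_eq_square del: norm_eq_zero)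
  finally show ?thesis .
qed (simp add: phase_power_def)

lemma Re_phase_power4:
  "Re (phase_power 4 w) = cmod w * (2 * (2 * (Re w / cmod w)^2 - 1)^2 - 1)"
proof (cases "w = 0")
  case False
  have "Re (w ^ 4) = 2 * (2 * (Re w)^2 - (cmod w)^2)^2 - (cmod w)^4"
    using Re_power2_eq_norm[of "w^2"] by (simp add: Re_power2_eq_norm norm_power flip: power_mult)
  then have "Re (phase_power 4 w) = (2 * (2 * (Re w)^2 - (cmod w)^2)^2 - (cmod w)^4) / cmod w ^ 3"
    by (simp add: phase_power_def Re_divide_of_real)
  also have "\<dots> = cmod w * (2 * (2 * (Re w / cmod w)^2 - 1)^2 - 1)"
    using False by (simp add: field_simps power2_eq_square power3_eq_cube power4_eq_xxxx del: norm_eq_zero)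
  finally show ?thesis .
qed (simp add: phase_power_def)

lemma neg_part_Re_le_phase_power_combination:
  "max 0 (- Re w) \<le> cmod w / 3 - Re w / 2 + 7/36 * Re (phase_power 2 w) - 1/36 * Re (phase_power 4 w)"
proof (cases "w = 0")
  case False
  define c where "c = Re w / cmod w"
  have "\<bar>c\<bar> \<le> 1"
    using abs_Re_le_cmod[of w] False by (simp add: c_def divide_le_eq_1)
  then have "cmod w * max 0 (- c) \<le> cmod w * (1/3 - c/2 + 7/36 * (2 * c^2 - 1) - 1/36 * (2 * (2 * c^2 - 1)^2 - 1))"
    by (intro mult_left_mono neg_part_le_chebyshev_combination) auto
  moreover have "max 0 (- Re w) = cmod w * max 0 (- c)"
    using False by (simp add: c_def max_mult_distrib_left)
  moreover have "cmod w / 3 - Re w / 2 + 7/36 * Re (phase_power 2 w) - 1/36 * Re (phase_power 4 w)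
      = cmod w * (1/3 - c/2 + 7/36 * (2 * c^2 - 1) - 1/36 * (2 * (2 * c^2 - 1)^2 - 1))"
    using False unfolding Re_phase_power2 Re_phase_power4 c_def[symmetric]
    by (simp add: c_def algebra_simps)
  ultimately show ?thesis by simp
qed (simp add: phase_power_def)

lemma sum_sum_Re_mult_cnj:
  "(\<Sum>i\<in>A. \<Sum>j\<in>A. Re (f i * cnj (f j))) = (cmod (\<Sum>i\<in>A. f i))^2"
proof -
  have "(\<Sum>i\<in>A. \<Sum>j\<in>A. Re (f i * cnj (f j))) = (\<Sum>i\<in>A. Re (f i * cnj (\<Sum>j\<in>A. f j)))"
    by (simp only: cnj_sum sum_distrib_left Re_sum)
  also have "\<dots> = Re ((\<Sum>i\<in>A. f i) * cnj (\<Sum>j\<in>A. f j))"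
    by (simp only: sum_distrib_right Re_sum)
  finally show ?thesis
    by (metis Re_complex_of_real complex_norm_square)
qed

lemma sum_neg_part_Re_mult_cnj_le:
  "(\<Sum>i\<in>A. \<Sum>j\<in>A. max 0 (- Re (z i * cnj (z j))))
     \<le> (\<Sum>i\<in>A. cmod (z i))^2 / 3 + 7/36 * (cmod (\<Sum>i\<in>A. phase_power 2 (z i)))^2"
proof -
  have "(\<Sum>i\<in>A. \<Sum>j\<in>A. max 0 (- Re (z i * cnj (z j))))
      \<le> (\<Sum>i\<in>A. \<Sum>j\<in>A. cmod (z i) * cmod (z j) / 3 - Re (z i * cnj (z j)) / 2
           + 7/36 * Re (phase_power 2 (z i) * cnj (phase_power 2 (z j)))
           - 1/36 * Re (phase_power 4 (z i) * cnj (phase_power 4 (z j))))"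
    using neg_part_Re_le_phase_power_combination[of "z i * cnj (z j)" for i j]
    by (intro sum_mono) (simp only: phase_power_mult_cnj norm_mult complex_mod_cnj)
  also have "\<dots> = (\<Sum>i\<in>A. \<Sum>j\<in>A. cmod (z i) * cmod (z j)) / 3
      - (\<Sum>i\<in>A. \<Sum>j\<in>A. Re (z i * cnj (z j))) / 2
      + 7/36 * (\<Sum>i\<in>A. \<Sum>j\<in>A. Re (phase_power 2 (z i) * cnj (phase_power 2 (z j))))
      - 1/36 * (\<Sum>i\<in>A. \<Sum>j\<in>A. Re (phase_power 4 (z i) * cnj (phase_power 4 (z j))))"
    by (simp only: sum.distrib sum_subtractf sum_divide_distrib sum_distrib_left)
  also have "\<dots> = (\<Sum>i\<in>A. cmod (z i))^2 / 3 - (cmod (\<Sum>i\<in>A. z i))^2 / 2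
      + 7/36 * (cmod (\<Sum>i\<in>A. phase_power 2 (z i)))^2
      - 1/36 * (cmod (\<Sum>i\<in>A. phase_power 4 (z i)))^2"
    by (simp only: sum_sum_Re_mult_cnj sum_product power2_eq_square)
  also have "\<dots> \<le> (\<Sum>i\<in>A. cmod (z i))^2 / 3 + 7/36 * (cmod (\<Sum>i\<in>A. phase_power 2 (z i)))^2"
    using zero_le_power2[of "cmod (\<Sum>i\<in>A. z i)"] zero_le_power2[of "cmod (\<Sum>i\<in>A. phase_power 4 (z i))"]
    by linarith
  finally show ?thesis .
qed

lemma square_norm_plus_Re_phase_power2_le:
  "(\<alpha> * cmod z + Re (cnj c * phase_power 2 z))^2
     \<le> \<alpha>^2 * (cmod z)^2 + 2 * \<alpha> * Re (cnj c * z^2) + (cmod c)^2 * (cmod z)^2"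
proof -
  define b where "b = Re (cnj c * phase_power 2 z)"
  have "Re (cnj c * z^2) = Re (of_real (cmod z) * (cnj c * phase_power 2 z))"
    by (simp only: mult.left_commute[of "of_real (cmod z)"] norm_mult_phase_power2)
  then have cross: "cmod z * b = Re (cnj c * z^2)"
    by (simp add: b_def)
  have "\<bar>b\<bar> \<le> \<bar>cmod c * cmod z\<bar>"
    using abs_Re_le_cmod[of "cnj c * phase_power 2 z"] by (simp add: b_def norm_mult norm_phase_power)
  then have "b^2 \<le> (cmod c)^2 * (cmod z)^2"
    by (simp only: abs_le_square_iff power_mult_distrib)
  moreover have "(\<alpha> * cmod z + b)^2 = \<alpha>^2 * (cmod z)^2 + 2 * \<alpha> * (cmod z * b) + b^2"
    by (simp add: power2_sum power_mult_distrib mult_ac)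
  ultimately show ?thesis
    unfolding b_def[symmetric] cross by linarith
qed

lemma sum_norm_phase_power2_le:
  assumes "(\<Sum>i\<in>A. (z i)^2) = 0"
  shows "(\<Sum>i\<in>A. cmod (z i))^2 / 3 + 7/36 * (cmod (\<Sum>i\<in>A. phase_power 2 (z i)))^2
           \<le> card A / 3 * (\<Sum>i\<in>A. (cmod (z i))^2)"
proof -
  define X where "X = (\<Sum>i\<in>A. cmod (z i))"
  define P where "P = (\<Sum>i\<in>A. phase_power 2 (z i))"
  define S where "S = (\<Sum>i\<in>A. (cmod (z i))^2)"
  define Q where "Q = X^2 / 3 + 7/36 * (cmod P)^2"
  define c where "c = complex_of_real (7/36) * P"
  (* Q is the sum of the t i, and the cross terms of the sum of their squares cancel because
     the z i ^ 2 sum to 0; Cauchy-Schwarz then gives Q^2 <= card A * Q / 3 * S. *)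
  define t where "t i = X / 3 * cmod (z i) + Re (cnj c * phase_power 2 (z i))" for i
  have sum_t: "(\<Sum>i\<in>A. t i) = Q"
  proof -
    have "(\<Sum>i\<in>A. t i) = X / 3 * X + Re (cnj c * P)"
      by (simp add: t_def X_def P_def sum.distrib sum_distrib_left Re_sum)
    also have "cnj c * P = of_real (7/36) * (P * cnj P)"
      by (simp add: c_def mult_ac)
    also have "\<dots> = of_real (7/36 * (cmod P)^2)"
      by (simp only: complex_norm_square[symmetric] of_real_mult)
    finally show ?thesis
      by (simp add: Q_def power2_eq_square)
  qed
  have "(\<Sum>i\<in>A. (t i)^2)
      \<le> (\<Sum>i\<in>A. (X / 3)^2 * (cmod (z i))^2 + 2 * (X / 3) * Re (cnj c * (z i)^2) + (cmod c)^2 * (cmod (z i))^2)"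
    unfolding t_def by (intro sum_mono square_norm_plus_Re_phase_power2_le)
  also have "\<dots> = ((X / 3)^2 + (cmod c)^2) * S + 2 * (X / 3) * Re (cnj c * (\<Sum>i\<in>A. (z i)^2))"
    by (simp add: S_def sum.distrib sum_distrib_left Re_sum algebra_simps)
  also have "\<dots> = ((X / 3)^2 + (cmod c)^2) * S"
    using assms by simp
  also have "\<dots> \<le> Q / 3 * S"
  proof (rule mult_right_mono)
    have "(X / 3)^2 + (cmod c)^2 = X^2 / 9 + 49/1296 * (cmod P)^2"
      by (simp add: c_def norm_mult power2_eq_square)
    then show "(X / 3)^2 + (cmod c)^2 \<le> Q / 3"
      by (simp add: Q_def)
    show "0 \<le> S"
      by (simp add: S_def sum_nonneg)
  qed
  finally have sum_t2: "(\<Sum>i\<in>A. (t i)^2) \<le> Q / 3 * S" .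
  have "Q^2 \<le> card A * (\<Sum>i\<in>A. (t i)^2)"
    using sum_squared_le_sum_of_squares[of t A] by (simp add: sum_t mult.commute)
  also have "\<dots> \<le> card A * (Q / 3 * S)"
    using sum_t2 by (intro mult_left_mono) auto
  finally have "Q * Q \<le> Q * (card A / 3 * S)"
    by (simp add: power2_eq_square algebra_simps)
  moreover have "0 \<le> Q" "0 \<le> S"
    by (simp_all add: Q_def X_def S_def sum_nonneg)
  ultimately have "Q \<le> card A / 3 * S"
    by (cases "Q = 0") (auto simp: mult_le_cancel_left)
  then show ?thesis
    by (simp add: Q_def X_def P_def S_def)
qed

section \<open>Quadratic forms with entries in [0, 1] off the diagonal\<close>

lemma sum_mult_Re_mult_cnj_lower_bound:
  fixes a :: "'a \<Rightarrow> 'a \<Rightarrow> real"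
  assumes off_diag: "\<forall>i\<in>I. \<forall>j\<in>I. i \<noteq> j \<longrightarrow> 0 \<le> a i j \<and> a i j \<le> 1"
    and diag: "\<forall>i\<in>I. 0 \<le> a i i"
    and "(\<Sum>i\<in>I. (z i)^2) = 0"
  shows "- (card I / 3 * (\<Sum>i\<in>I. (cmod (z i))^2)) \<le> (\<Sum>i\<in>I. \<Sum>j\<in>I. a i j * Re (z i * cnj (z j)))"
proof -
  have "- max 0 (- Re (z i * cnj (z j))) \<le> a i j * Re (z i * cnj (z j))" if "i \<in> I" "j \<in> I" for i j
  proof (cases "0 \<le> Re (z i * cnj (z j))")
    case True
    then show ?thesis
      using that off_diag diag by (cases "i = j") auto
  next
    case False
    then have "i \<noteq> j"
      by (auto simp: complex_mult_cnj)
    then have "0 \<le> (1 - a i j) * - Re (z i * cnj (z j))"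
      using that off_diag False by (intro mult_nonneg_nonneg) auto
    then show ?thesis
      using False by (simp add: algebra_simps)
  qed
  then have "- (\<Sum>i\<in>I. \<Sum>j\<in>I. max 0 (- Re (z i * cnj (z j))))
      \<le> (\<Sum>i\<in>I. \<Sum>j\<in>I. a i j * Re (z i * cnj (z j)))"
    by (simp only: sum_negf[symmetric]) (intro sum_mono)
  moreover have "(\<Sum>i\<in>I. \<Sum>j\<in>I. max 0 (- Re (z i * cnj (z j)))) \<le> card I / 3 * (\<Sum>i\<in>I. (cmod (z i))^2)"
    using sum_neg_part_Re_mult_cnj_le sum_norm_phase_power2_le[OF assms(3)] by (rule order_trans)
  ultimately show ?thesis
    by linarith
qed

definition quad_form :: "('a \<Rightarrow> 'a \<Rightarrow> real) \<Rightarrow> 'a set \<Rightarrow> ('a \<Rightarrow> real) \<Rightarrow> real" where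
  "quad_form a I x = (\<Sum>i\<in>I. x i * (\<Sum>j\<in>I. a i j * x j))"

lemma quad_form_orthonormal_pair_lower_bound:
  fixes a :: "'a \<Rightarrow> 'a \<Rightarrow> real"
  assumes "\<forall>i\<in>I. \<forall>j\<in>I. i \<noteq> j \<longrightarrow> 0 \<le> a i j \<and> a i j \<le> 1"
    and "\<forall>i\<in>I. 0 \<le> a i i"
    and x_unit: "(\<Sum>i\<in>I. (x i)^2) = 1" and y_unit: "(\<Sum>i\<in>I. (y i)^2) = 1"
    and orth: "(\<Sum>i\<in>I. x i * y i) = 0"
  shows "- (2 * card I / 3) \<le> quad_form a I x + quad_form a I y"
proof -
  define z where "z i = Complex (x i) (y i)" for i
  have "(\<Sum>i\<in>I. (z i)^2) = Complex ((\<Sum>i\<in>I. (x i)^2) - (\<Sum>i\<in>I. (y i)^2)) (2 * (\<Sum>i\<in>I. x i * y i))"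
    by (simp add: complex_eq_iff z_def Re_sum Im_sum power2_eq_square sum_subtractf sum_distrib_left)
  then have "(\<Sum>i\<in>I. (z i)^2) = 0"
    by (simp add: x_unit y_unit orth complex_eq_iff)
  moreover have "(\<Sum>i\<in>I. (cmod (z i))^2) = 2"
    by (simp add: z_def cmod_power2 sum.distrib x_unit y_unit)
  moreover have "quad_form a I x + quad_form a I y = (\<Sum>i\<in>I. \<Sum>j\<in>I. a i j * Re (z i * cnj (z j)))"
    by (simp add: quad_form_def z_def sum_distrib_left distrib_left sum.distrib mult_ac)
  ultimately show ?thesis
    using sum_mult_Re_mult_cnj_lower_bound[OF assms(1,2), of z] by simp
qed

section \<open>Two orthonormal vectors from a Schur triangularisation\<close>

lemma quad_form_scale:
  "quad_form a I (\<lambda>i. c * x i) = c^2 * quad_form a I x"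
  by (simp add: quad_form_def sum_distrib_left power2_eq_square mult_ac)

lemma quad_form_eigen_plus_orthogonal:
  assumes "\<forall>i\<in>I. (\<Sum>j\<in>I. a i j * x j) = \<nu> * x i + c * y i"
    and "(\<Sum>i\<in>I. x i * y i) = 0"
  shows "quad_form a I x = \<nu> * (\<Sum>i\<in>I. (x i)^2)"
proof -
  have "quad_form a I x = (\<Sum>i\<in>I. \<nu> * (x i)^2 + c * (x i * y i))"
    using assms(1) by (simp add: quad_form_def algebra_simps power2_eq_square)
  also have "\<dots> = \<nu> * (\<Sum>i\<in>I. (x i)^2)"
    using assms(2) by (simp add: sum.distrib flip: sum_distrib_left)
  finally show ?thesis .
qed

lemma normalized_unit_vector:
  fixes x :: "'a \<Rightarrow> real"
  assumes "0 < (\<Sum>i\<in>I. (x i)^2)" (is "0 < ?s")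
  shows "(\<Sum>i\<in>I. (x i / sqrt ?s)^2) = 1"
    and "quad_form a I (\<lambda>i. x i / sqrt ?s) = quad_form a I x / ?s"
proof -
  show "(\<Sum>i\<in>I. (x i / sqrt ?s)^2) = 1"
    using assms by (simp add: power_divide flip: sum_divide_distrib)
  have "quad_form a I (\<lambda>i. 1 / sqrt ?s * x i) = (1 / sqrt ?s)^2 * quad_form a I x"
    by (rule quad_form_scale)
  then show "quad_form a I (\<lambda>i. x i / sqrt ?s) = quad_form a I x / ?s"
    using assms by (simp add: power_divide)
qed

lemma orthonormal_pair_from_triangular_action:
  fixes a :: "'a \<Rightarrow> 'a \<Rightarrow> real"
  assumes "finite I"
    and Ax: "\<forall>i\<in>I. (\<Sum>j\<in>I. a i j * x j) = \<nu> * x i"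
    and Ay: "\<forall>i\<in>I. (\<Sum>j\<in>I. a i j * y j) = b * x i + \<mu> * y i"
    and indep: "\<forall>c d. (\<forall>i\<in>I. c * x i + d * y i = 0) \<longrightarrow> c = 0 \<and> d = 0"
  obtains u v where "(\<Sum>i\<in>I. (u i)^2) = 1" "(\<Sum>i\<in>I. (v i)^2) = 1" "(\<Sum>i\<in>I. u i * v i) = 0"
    "quad_form a I u = \<nu>" "quad_form a I v = \<mu>"
proof -
  define sx where "sx = (\<Sum>i\<in>I. (x i)^2)"
  define \<kappa> where "\<kappa> = (\<Sum>i\<in>I. x i * y i) / sx"
  define w where "w i = y i - \<kappa> * x i" for i
  define sw where "sw = (\<Sum>i\<in>I. (w i)^2)"
  have "\<exists>i\<in>I. x i \<noteq> 0"
    using indep[rule_format, of 1 0] by auto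
  then have sx_pos: "0 < sx"
    using \<open>finite I\<close> by (auto simp: sx_def intro!: sum_pos2)
  have "(\<Sum>i\<in>I. x i * w i) = (\<Sum>i\<in>I. x i * y i) - \<kappa> * sx"
    by (simp add: w_def sx_def right_diff_distrib sum_subtractf sum_distrib_left power2_eq_square mult_ac)
  then have xw: "(\<Sum>i\<in>I. x i * w i) = 0"
    using sx_pos by (simp add: \<kappa>_def)
  have "\<exists>i\<in>I. w i \<noteq> 0"
    using indep[rule_format, of "- \<kappa>" 1] by (auto simp: w_def)
  then have sw_pos: "0 < sw"
    using \<open>finite I\<close> by (auto simp: sw_def intro!: sum_pos2)
  have Aw: "\<forall>i\<in>I. (\<Sum>j\<in>I. a i j * w j) = \<mu> * w i + (b + \<kappa> * \<mu> - \<kappa> * \<nu>) * x i"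
    using Ax Ay by (simp add: w_def right_diff_distrib sum_subtractf algebra_simps flip: sum_distrib_left)
  have "quad_form a I x = \<nu> * sx"
    unfolding sx_def by (rule quad_form_eigen_plus_orthogonal[where c = 0 and y = w]) (use Ax xw in auto)
  moreover have "quad_form a I w = \<mu> * sw"
    unfolding sw_def by (rule quad_form_eigen_plus_orthogonal[OF Aw]) (use xw in \<open>simp add: mult.commute\<close>)
  moreover have "(\<Sum>i\<in>I. x i / sqrt sx * (w i / sqrt sw)) = 0"
    using xw by (simp flip: sum_divide_distrib)
  ultimately show ?thesis
    using that[of "\<lambda>i. x i / sqrt sx" "\<lambda>i. w i / sqrt sw"] sx_pos sw_pos
      normalized_unit_vector(1)[of x I] normalized_unit_vector(2)[of x I a] normalized_unit_vector(1)[of w I] normalized_unit_vector(2)[of w I a]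
    by (simp add: sx_def sw_def)
qed

lemma index_mult_mat_sum:
  assumes "A \<in> carrier_mat m n" "B \<in> carrier_mat n p" "i < m" "j < p"
  shows "(A * B) $$ (i, j) = (\<Sum>k<n. A $$ (i, k) * B $$ (k, j))"
  using assms by (simp add: scalar_prod_def atLeast0LessThan)

lemma index_mult_upper_triangular:
  assumes "upper_triangular B" "B \<in> carrier_mat n n" "P \<in> carrier_mat m n" "i < m" "j < n"
  shows "(P * B) $$ (i, j) = (\<Sum>k\<le>j. P $$ (i, k) * B $$ (k, j))"
proof -
  have "(P * B) $$ (i, j) = (\<Sum>k<n. P $$ (i, k) * B $$ (k, j))"
    using assms by (intro index_mult_mat_sum) auto
  also have "\<dots> = (\<Sum>k\<le>j. P $$ (i, k) * B $$ (k, j))"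
    using assms by (intro sum.mono_neutral_right) (auto simp: upper_triangular_def)
  finally show ?thesis .
qed

lemma left_invertible_columns_independent:
  fixes P Q :: "'a :: comm_semiring_1 mat"
  assumes Q: "Q \<in> carrier_mat n n" and P: "P \<in> carrier_mat n n" and QP: "Q * P = 1\<^sub>m n"
    and j: "j < n" and k: "k < n" and "j \<noteq> k"
    and comb: "\<forall>i\<in>{..<n}. c * P $$ (i, j) + d * P $$ (i, k) = 0"
  shows "c = 0 \<and> d = 0"
proof -
  have "c * (Q * P) $$ (r, j) + d * (Q * P) $$ (r, k) = 0" if "r < n" for r
  proof -
    have "c * (Q * P) $$ (r, j) + d * (Q * P) $$ (r, k)
        = c * (\<Sum>l<n. Q $$ (r, l) * P $$ (l, j)) + d * (\<Sum>l<n. Q $$ (r, l) * P $$ (l, k))"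
      using that j k by (simp only: index_mult_mat_sum[OF Q P])
    also have "\<dots> = (\<Sum>l<n. Q $$ (r, l) * (c * P $$ (l, j) + d * P $$ (l, k)))"
      by (simp add: sum_distrib_left sum.distrib distrib_left mult_ac)
    also have "\<dots> = 0"
      using comb by simp
    finally show ?thesis .
  qed
  from this[of j] this[of k] show ?thesis
    using QP j k \<open>j \<noteq> k\<close> by simp
qed

lemma schur_first_two_columns:
  fixes A :: "'a :: conjugatable_ordered_field mat"
  assumes A: "A \<in> carrier_mat n n" and char_poly: "char_poly A = (\<Prod>e\<leftarrow>es. [:- e, 1:])"
    and "2 \<le> n"
  obtains x y b where
    "\<forall>i\<in>{..<n}. (\<Sum>j\<in>{..<n}. A $$ (i, j) * x j) = es ! 0 * x i"
    "\<forall>i\<in>{..<n}. (\<Sum>j\<in>{..<n}. A $$ (i, j) * y j) = b * x i + es ! 1 * y i"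
    "\<forall>c d. (\<forall>i\<in>{..<n}. c * x i + d * y i = 0) \<longrightarrow> c = 0 \<and> d = 0"
proof -
  obtain B P Q where "schur_decomposition A es = (B, P, Q)"
    by (cases "schur_decomposition A es") auto
  with schur_decomposition[OF A char_poly]
  have similar: "similar_mat_wit A B P Q" and B_triangular: "upper_triangular B"
    and "diag_mat B = es"
    by auto
  from similar A have B: "B \<in> carrier_mat n n" and P: "P \<in> carrier_mat n n" and Q: "Q \<in> carrier_mat n n"
    and QP: "Q * P = 1\<^sub>m n" and "A = P * B * Q"
    unfolding similar_mat_wit_def Let_def by auto
  then have "A * P = P * B * (Q * P)"
    by (simp add: assoc_mult_mat[of _ n n _ n _ n])
  with QP B P have AP: "A * P = P * B"
    by simp
  have B_diag: "B $$ (k, k) = es ! k" if "k < n" for k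
    using \<open>diag_mat B = es\<close> B that by (auto simp: diag_mat_def)
  have column: "(\<Sum>j<n. A $$ (i, j) * P $$ (j, k)) = (\<Sum>l\<le>k. P $$ (i, l) * B $$ (l, k))"
    if "i < n" "k < n" for i k
    using index_mult_mat_sum[OF A P that] index_mult_upper_triangular[OF B_triangular B P that] AP
    by simp
  show ?thesis
  proof
    show "\<forall>i\<in>{..<n}. (\<Sum>j\<in>{..<n}. A $$ (i, j) * P $$ (j, 0)) = es ! 0 * P $$ (i, 0)"
      using column[of _ 0] B_diag[of 0] \<open>2 \<le> n\<close> by simp
    show "\<forall>i\<in>{..<n}. (\<Sum>j\<in>{..<n}. A $$ (i, j) * P $$ (j, 1))
        = B $$ (0, 1) * P $$ (i, 0) + es ! 1 * P $$ (i, 1)"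
      using column[of _ 1] B_diag[of 1] \<open>2 \<le> n\<close> by (simp add: atMost_Suc)
    show "\<forall>c d. (\<forall>i\<in>{..<n}. c * P $$ (i, 0) + d * P $$ (i, 1) = 0) \<longrightarrow> c = 0 \<and> d = 0"
      using \<open>2 \<le> n\<close> by (intro allI impI left_invertible_columns_independent[OF Q P QP]) auto
  qed
qed

lemma orthonormal_pair_from_char_poly:
  fixes A :: "real mat"
  assumes "A \<in> carrier_mat n n" "char_poly A = (\<Prod>e\<leftarrow>es. [:- e, 1:])" "2 \<le> n"
  obtains u v where "(\<Sum>i<n. (u i)^2) = 1" "(\<Sum>i<n. (v i)^2) = 1" "(\<Sum>i<n. u i * v i) = 0"
    "quad_form (\<lambda>i j. A $$ (i, j)) {..<n} u = es ! 0"
    "quad_form (\<lambda>i j. A $$ (i, j)) {..<n} v = es ! 1"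
proof -
  obtain x y b where
    "\<forall>i\<in>{..<n}. (\<Sum>j\<in>{..<n}. A $$ (i, j) * x j) = es ! 0 * x i"
    "\<forall>i\<in>{..<n}. (\<Sum>j\<in>{..<n}. A $$ (i, j) * y j) = b * x i + es ! 1 * y i"
    "\<forall>c d. (\<forall>i\<in>{..<n}. c * x i + d * y i = 0) \<longrightarrow> c = 0 \<and> d = 0"
    by (rule schur_first_two_columns[OF assms])
  from orthonormal_pair_from_triangular_action[OF finite_lessThan this] that
  show ?thesis
    by blast
qed

theorem theorem1p2:
  fixes n :: nat and A :: "real mat" and \<mu> :: "nat \<Rightarrow> real"
  assumes "n \<ge> 2"
    and "A \<in> carrier_mat n n"
    and "transpose_mat A = A"
    and "\<forall>i<n. \<forall>j<n. i \<noteq> j \<longrightarrow> 0 \<le> A $$ (i, j) \<and> A $$ (i, j) \<le> 1"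
    and "\<forall>i<n. 0 \<le> A $$ (i, i)"
    and "char_poly A = (\<Prod>i\<in>{1..n}. [:- \<mu> i, 1:])"
    and "\<forall>i j. 1 \<le> i \<and> i \<le> j \<and> j \<le> n \<longrightarrow> \<mu> j \<le> \<mu> i"
  shows "\<mu> (n - 1) + \<mu> n \<ge> - (2 * real n / 3) \<and> \<mu> (n - 1) \<ge> - (real n / 3)"
proof -
  define es where "es = map (\<lambda>k. \<mu> (n - k)) [0..<n]"
  have "(\<Prod>i\<in>{1..n}. [:- \<mu> i, 1:]) = (\<Prod>k<n. [:- \<mu> (n - k), 1:])"
    by (rule prod.reindex_bij_witness[of _ "\<lambda>i. n - i" "\<lambda>k. n - k"]) auto
  also have "\<dots> = (\<Prod>e\<leftarrow>es. [:- e, 1:])"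
    using prod.distinct_set_conv_list[of "[0..<n]" "\<lambda>k. [:- \<mu> (n - k), 1:]"]
    by (simp add: es_def atLeast0LessThan o_def)
  finally have "char_poly A = (\<Prod>e\<leftarrow>es. [:- e, 1:])"
    using assms(6) by simp
  then obtain u v where "(\<Sum>i<n. (u i)^2) = 1" "(\<Sum>i<n. (v i)^2) = 1" "(\<Sum>i<n. u i * v i) = 0"
    and "quad_form (\<lambda>i j. A $$ (i, j)) {..<n} u = es ! 0"
    and "quad_form (\<lambda>i j. A $$ (i, j)) {..<n} v = es ! 1"
    using orthonormal_pair_from_char_poly assms(1,2) by blast
  moreover have "es ! 0 = \<mu> n" "es ! 1 = \<mu> (n - 1)"
    using assms(1) by (simp_all add: es_def)
  ultimately have "- (2 * real n / 3) \<le> \<mu> n + \<mu> (n - 1)"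
    using quad_form_orthonormal_pair_lower_bound[of "{..<n}" "\<lambda>i j. A $$ (i, j)" u v] assms(4,5)
    by simp
  moreover have "\<mu> n \<le> \<mu> (n - 1)"
    using assms(1,7) by auto
  ultimately show ?thesis
    by linarith
qed

end
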